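(* Let $\Gamma:\mathring\Delta\to\mathbb{R}$ satisfy condition (K). Then for any $T>0$ there exists a sequence of continuous kernels $\Gamma_M:\Delta_T\to\mathbb{R}$ such that $\int_0^t(\Gamma(t,s)-\Gamma_M(t,s))^2\mathrm{d}s\to0$ as $M\to\infty$ for every $t\in[0,T]$, and $$\int_s^t\Gamma_M(t,u)^2\mathrm{d}u+\int_0^s(\Gamma_M(t,u)-\Gamma_M(s,u))^2\mathrm{d}u\le2\eta|t-s|^{2\gamma},\quad (t,s)\in\Delta_T,\ M\in\mathbb{N},$$ where $\eta,\gamma$ are the constants of condition (K) for $T$. Besides, if there exists $\varepsilon>0$ such that either $\Gamma(t,s)\ge0$ for all $(t,s)\in\Delta$ with $s\ge t-\varepsilon$, or $\Gamma(t,s)\le0$ for all such $(t,s)$, then the $\Gamma_M$ may be chosen such that $\Gamma_M(s,s)\ne0$ for almost every $s$.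
   Context: $\Delta=\{(t,s):0\le s\le t\}$, $\mathring\Delta=\{(t,s):0<s<t\}$, $\Delta_T=\{(t,s):0\le s\le t\le T\}$. Condition (K): for every $T\in(0,\infty)$ there exist $\eta>0$, $\gamma\in(0,1/2]$ with $\int_s^t\Gamma(t,u)^2\mathrm{d}u+\int_0^s(\Gamma(t,u)-\Gamma(s,u))^2\mathrm{d}u\le\eta(t-s)^{2\gamma}$ for $(t,s)\in\Delta_T$. *)

theory Defs
  imports "HOL-Analysis.Analysis"
begin

definition kernel_incr :: "(real \<Rightarrow> real \<Rightarrow> real) \<Rightarrow> real \<Rightarrow> real \<Rightarrow> ennreal" where
  "kernel_incr K t s =
     (\<integral>\<^sup>+ u. ennreal ((K t u)\<^sup>2) * indicator {s<..<t} u \<partial>lborel)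
   + (\<integral>\<^sup>+ u. ennreal ((K t u - K s u)\<^sup>2) * indicator {0<..<s} u \<partial>lborel)"

definition condK_T :: "(real \<Rightarrow> real \<Rightarrow> real) \<Rightarrow> real \<Rightarrow> real \<Rightarrow> real \<Rightarrow> bool" where
  "condK_T K T \<eta> \<gamma> \<longleftrightarrow> \<eta> > 0 \<and> 0 < \<gamma> \<and> \<gamma> \<le> 1/2 \<and>
     (\<forall>t s. 0 \<le> s \<and> s \<le> t \<and> t \<le> T \<longrightarrow>
        kernel_incr K t s \<le> ennreal (\<eta> * (t - s) powr (2 * \<gamma>)))"

text \<open>Condition (K): sectionwise measurability of the kernel on the open simplex
  (implicit for the integrals to make sense) and, for every T > 0, constants eta, gamma.\<close>
definition condK :: "(real \<Rightarrow> real \<Rightarrow> real) \<Rightarrow> bool" where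
  "condK K \<longleftrightarrow>
     (\<forall>t>0. (\<lambda>u. K t u * indicator {0<..<t} u) \<in> borel_measurable lborel) \<and>
     (\<forall>T>0. \<exists>\<eta> \<gamma>. condK_T K T \<eta> \<gamma>)"

end

(*
  Gamma_M(t, .) is the forward moving average, over windows of length 1/(M+1), of the section
  Gamma(t, .) restricted to (0, t), shifted by the constant c/(M+1).  Averaging is a contraction
  of L2(R) that commutes with differences, and the average of Gamma(s, .) vanishes on [s, oo), so
  the averaged kernel inherits the (K) bound with the same eta and gamma.  The shift costs at most
  3 (c/(M+1))^2 (t - s), which gamma <= 1/2 and the choice of c absorb into eta/2 (t - s)^(2 gamma).
  Joint continuity comes from Cauchy-Schwarz and the L2-Hoelder continuity of t -> Gamma(t, .);
  L2 convergence from Lebesgue's differentiation theorem and Fatou's lemma.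
*)
theory Submission
  imports Defs
begin

section \<open>Forward moving averages in L2\<close>

abbreviation L2_sqnorm :: "(real \<Rightarrow> real) \<Rightarrow> ennreal" where
  "L2_sqnorm g \<equiv> \<integral>\<^sup>+x. ennreal ((g x)\<^sup>2) \<partial>lborel"

lemma square_lborel_integral_mult_le:
  fixes g p :: "real \<Rightarrow> real"
  assumes [measurable]: "g \<in> borel_measurable lborel" "p \<in> borel_measurable lborel"
  shows "ennreal ((\<integral>x. g x * p x \<partial>lborel)\<^sup>2) \<le> L2_sqnorm g * L2_sqnorm p"
proof -
  have "ennreal \<bar>\<integral>x. g x * p x \<partial>lborel\<bar> \<le> (\<integral>\<^sup>+x. ennreal \<bar>g x * p x\<bar> \<partial>lborel)"
  proof (cases "integrable lborel (\<lambda>x. g x * p x)")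
    case True
    then show ?thesis using integral_norm_bound_ennreal[of lborel "\<lambda>x. g x * p x"] by simp
  qed (simp add: not_integrable_integral_eq)
  then have "(ennreal \<bar>\<integral>x. g x * p x \<partial>lborel\<bar>)\<^sup>2 \<le> (\<integral>\<^sup>+x. ennreal \<bar>g x\<bar> * ennreal \<bar>p x\<bar> \<partial>lborel)\<^sup>2"
    by (simp add: abs_mult ennreal_mult power_mono)
  also have "\<dots> \<le> (\<integral>\<^sup>+x. (ennreal \<bar>g x\<bar>)\<^sup>2 \<partial>lborel) * (\<integral>\<^sup>+x. (ennreal \<bar>p x\<bar>)\<^sup>2 \<partial>lborel)"
    by (rule Cauchy_Schwarz_nn_integral) auto
  finally show ?thesis by (simp add: ennreal_power)
qed

lemma integrable_mult_if_L2:
  fixes g p :: "real \<Rightarrow> real"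
  assumes [measurable]: "g \<in> borel_measurable lborel" "p \<in> borel_measurable lborel"
    and "L2_sqnorm g < \<infinity>" "L2_sqnorm p < \<infinity>"
  shows "integrable lborel (\<lambda>x. g x * p x)"
proof -
  have "(\<integral>\<^sup>+x. ennreal \<bar>g x\<bar> * ennreal \<bar>p x\<bar> \<partial>lborel)\<^sup>2
      \<le> (\<integral>\<^sup>+x. (ennreal \<bar>g x\<bar>)\<^sup>2 \<partial>lborel) * (\<integral>\<^sup>+x. (ennreal \<bar>p x\<bar>)\<^sup>2 \<partial>lborel)"
    by (rule Cauchy_Schwarz_nn_integral) auto
  also have "\<dots> < \<infinity>"
    using assms(3,4) by (simp add: ennreal_power ennreal_mult_less_top)
  finally have "(\<integral>\<^sup>+x. ennreal \<bar>g x\<bar> * ennreal \<bar>p x\<bar> \<partial>lborel) < \<infinity>"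
    by (simp add: power_less_top_ennreal)
  then show ?thesis
    by (subst integrable_iff_bounded) (simp add: abs_mult ennreal_mult)
qed

lemma L2_sqnorm_indicator_Icc: "L2_sqnorm (indicator {a..b}) = ennreal (max 0 (b - a))"
proof -
  have "L2_sqnorm (indicator {a..b}) = (\<integral>\<^sup>+x. indicator {a..b} x \<partial>lborel)"
    by (intro nn_integral_cong) (auto simp: indicator_def)
  then show ?thesis by (simp add: max_def)
qed

lemma integrable_mult_indicator_Icc_if_L2:
  assumes "g \<in> borel_measurable lborel" "L2_sqnorm g < \<infinity>"
  shows "integrable lborel (\<lambda>x. g x * indicator {a..b} x)"
  using assms by (intro integrable_mult_if_L2) (auto simp: L2_sqnorm_indicator_Icc)

definition forward_average :: "real \<Rightarrow> (real \<Rightarrow> real) \<Rightarrow> real \<Rightarrow> real" where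
  "forward_average m g u = m * (\<integral>v. g v * indicator {u..u + 1/m} v \<partial>lborel)"

lemma measurable_indicator_window:
  "(\<lambda>(u::real, v). indicator {u..u + c} v :: real) \<in> borel_measurable (lborel \<Otimes>\<^sub>M lborel)"
proof -
  have [measurable]: "fst \<in> borel_measurable (lborel \<Otimes>\<^sub>M (lborel::real measure))"
    "snd \<in> borel_measurable (lborel \<Otimes>\<^sub>M (lborel::real measure))"
    by (simp_all add: measurable_lborel2)
  have "(\<lambda>(u, v). indicator {u..u + c} v :: real) = (\<lambda>x. if fst x \<le> snd x \<and> snd x \<le> fst x + c then 1 else 0)"
    by (auto simp: indicator_def fun_eq_iff)
  also have "\<dots> \<in> borel_measurable (lborel \<Otimes>\<^sub>M lborel)"
    by measurable
  finally show ?thesis .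
qed

lemma forward_average_measurable [measurable]:
  assumes [measurable]: "g \<in> borel_measurable lborel"
  shows "forward_average m g \<in> borel_measurable lborel"
proof -
  have [measurable]: "(\<lambda>(u, v). indicator {u..u + 1/m} v :: real) \<in> borel_measurable (lborel \<Otimes>\<^sub>M lborel)"
    by (rule measurable_indicator_window)
  show ?thesis unfolding forward_average_def by measurable
qed

lemma forward_average_square_le_window:
  assumes m: "m > 0" and [measurable]: "g \<in> borel_measurable lborel"
  shows "ennreal ((forward_average m g u)\<^sup>2)
    \<le> ennreal m * (\<integral>\<^sup>+v. ennreal ((g v)\<^sup>2) * indicator {u..u + 1/m} v \<partial>lborel)"
proof -
  let ?I = "{u..u + 1/m}"
  let ?W = "\<integral>\<^sup>+v. ennreal ((g v)\<^sup>2) * indicator ?I v \<partial>lborel"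
  have "(\<integral>v. g v * indicator ?I v \<partial>lborel) = (\<integral>v. (g v * indicator ?I v) * indicator ?I v \<partial>lborel)"
    by (intro Bochner_Integration.integral_cong) (auto simp: indicator_def)
  then have "ennreal ((\<integral>v. g v * indicator ?I v \<partial>lborel)\<^sup>2)
      \<le> L2_sqnorm (\<lambda>v. g v * indicator ?I v) * L2_sqnorm (indicator ?I)"
    by (simp only:) (rule square_lborel_integral_mult_le, auto)
  also have "L2_sqnorm (\<lambda>v. g v * indicator ?I v) = ?W"
    by (intro nn_integral_cong) (auto simp: indicator_def)
  also have "L2_sqnorm (indicator ?I) = ennreal (1/m)"
    using m by (simp add: L2_sqnorm_indicator_Icc)
  finally have window: "ennreal ((\<integral>v. g v * indicator ?I v \<partial>lborel)\<^sup>2) \<le> ?W * ennreal (1/m)" .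
  have "ennreal ((forward_average m g u)\<^sup>2) = ennreal (m\<^sup>2) * ennreal ((\<integral>v. g v * indicator ?I v \<partial>lborel)\<^sup>2)"
    by (simp add: forward_average_def power_mult_distrib ennreal_mult)
  also have "\<dots> \<le> ennreal (m\<^sup>2) * (?W * ennreal (1/m))"
    by (rule mult_left_mono[OF window]) simp
  also have "\<dots> = ennreal (m\<^sup>2 * (1/m)) * ?W"
    using m by (subst ennreal_mult) (auto simp: mult_ac)
  also have "m\<^sup>2 * (1/m) = m"
    using m by (simp add: power2_eq_square)
  finally show ?thesis .
qed

lemma L2_sqnorm_forward_average_le:
  assumes m: "m > 0" and [measurable]: "g \<in> borel_measurable lborel"
  shows "L2_sqnorm (forward_average m g) \<le> L2_sqnorm g"
proof -
  let ?F = "\<lambda>u v. ennreal m * (ennreal ((g v)\<^sup>2) * ennreal (indicator {u..u + 1/m} v))"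
  have [measurable]: "(\<lambda>(u, v). indicator {u..u + 1/m} v :: real) \<in> borel_measurable (lborel \<Otimes>\<^sub>M lborel)"
    by (rule measurable_indicator_window)
  have F: "(\<lambda>(u, v). ?F u v) \<in> borel_measurable (lborel \<Otimes>\<^sub>M lborel)"
    by measurable
  have inner: "(\<integral>\<^sup>+u. ?F u v \<partial>lborel) = ennreal ((g v)\<^sup>2)" for v
  proof -
    have "(\<integral>\<^sup>+u. ?F u v \<partial>lborel) = (\<integral>\<^sup>+u. (ennreal m * ennreal ((g v)\<^sup>2)) * indicator {v - 1/m..v} u \<partial>lborel)"
      by (intro nn_integral_cong) (auto simp: indicator_def mult_ac)
    also have "\<dots> = ennreal m * ennreal ((g v)\<^sup>2) * ennreal (1/m)"
      using m by (subst nn_integral_cmult) auto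
    also have "\<dots> = ennreal ((g v)\<^sup>2)"
      using m by (simp add: ennreal_mult[symmetric] mult_ac)
    finally show ?thesis .
  qed
  have "L2_sqnorm (forward_average m g) \<le> (\<integral>\<^sup>+u. (\<integral>\<^sup>+v. ?F u v \<partial>lborel) \<partial>lborel)"
    using forward_average_square_le_window[OF m]
    by (intro nn_integral_mono) (simp add: nn_integral_cmult ennreal_indicator)
  also have "\<dots> = (\<integral>\<^sup>+v. (\<integral>\<^sup>+u. ?F u v \<partial>lborel) \<partial>lborel)"
    using lborel_pair.Fubini'[OF F] by simp
  also have "\<dots> = L2_sqnorm g"
    by (simp only: inner)
  finally show ?thesis .
qed

lemma forward_average_diff:
  assumes "g1 \<in> borel_measurable lborel" "g2 \<in> borel_measurable lborel"
    and "L2_sqnorm g1 < \<infinity>" "L2_sqnorm g2 < \<infinity>"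
  shows "forward_average m g1 u - forward_average m g2 u = forward_average m (\<lambda>v. g1 v - g2 v) u"
  using Bochner_Integration.integral_diff[OF integrable_mult_indicator_Icc_if_L2[OF assms(1,3)]
      integrable_mult_indicator_Icc_if_L2[OF assms(2,4)]]
  by (simp add: forward_average_def right_diff_distrib left_diff_distrib)

lemma forward_average_square_le:
  assumes m: "m > 0" and [measurable]: "g \<in> borel_measurable lborel"
    and B: "L2_sqnorm g \<le> ennreal B" "B \<ge> 0"
  shows "(forward_average m g u)\<^sup>2 \<le> m * B"
proof -
  have "ennreal ((forward_average m g u)\<^sup>2)
      \<le> ennreal m * (\<integral>\<^sup>+v. ennreal ((g v)\<^sup>2) * indicator {u..u + 1/m} v \<partial>lborel)"
    by (rule forward_average_square_le_window[OF m]) simp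
  also have "\<dots> \<le> ennreal m * L2_sqnorm g"
    by (intro mult_left_mono nn_integral_mono) (auto simp: indicator_def)
  also have "\<dots> \<le> ennreal (m * B)"
    using m B by (simp add: ennreal_mult mult_left_mono)
  finally show ?thesis
    using m B by (simp add: ennreal_le_iff)
qed

lemma L2_sqnorm_indicator_shift_diff_le:
  fixes u u' d :: real
  assumes "d \<ge> 0"
  shows "L2_sqnorm (\<lambda>v. indicator {u..u+d} v - indicator {u'..u'+d} v) \<le> ennreal (2 * \<bar>u - u'\<bar>)"
proof -
  let ?l = "min u u'" and ?r = "max u u'"
  have "L2_sqnorm (\<lambda>v. indicator {u..u+d} v - indicator {u'..u'+d} v)
      \<le> (\<integral>\<^sup>+v. indicator {?l..?r} v + indicator {?l + d..?r + d} v \<partial>lborel)"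
  proof (intro nn_integral_mono)
    fix v
    have "(indicator {u..u+d} v - indicator {u'..u'+d} v)\<^sup>2
        \<le> (indicator {?l..?r} v + indicator {?l + d..?r + d} v :: real)"
      unfolding indicator_def by (cases "u \<le> u'") (simp_all add: min_def max_def)
    then show "ennreal ((indicator {u..u+d} v - indicator {u'..u'+d} v)\<^sup>2)
        \<le> indicator {?l..?r} v + indicator {?l + d..?r + d} v"
      by (simp add: ennreal_leI flip: ennreal_plus ennreal_indicator)
  qed
  also have "\<dots> = ennreal \<bar>u - u'\<bar> + ennreal \<bar>u - u'\<bar>"
    by (subst nn_integral_add) (auto simp: max_def min_def)
  also have "\<dots> = ennreal (2 * \<bar>u - u'\<bar>)"
    by (simp flip: ennreal_plus)
  finally show ?thesis .
qed

lemma forward_average_shift_square_le: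
  assumes m: "m > 0" and [measurable]: "g \<in> borel_measurable lborel"
    and B: "L2_sqnorm g \<le> ennreal B" "B \<ge> 0"
  shows "(forward_average m g u - forward_average m g u')\<^sup>2 \<le> m\<^sup>2 * (B * (2 * \<bar>u - u'\<bar>))"
proof -
  let ?p = "\<lambda>v. indicator {u..u + 1/m} v - indicator {u'..u' + 1/m} v :: real"
  have fin: "L2_sqnorm g < \<infinity>"
    using B by (simp add: le_less_trans)
  have diff: "forward_average m g u - forward_average m g u' = m * (\<integral>v. g v * ?p v \<partial>lborel)"
    using Bochner_Integration.integral_diff[OF integrable_mult_indicator_Icc_if_L2[OF _ fin]
        integrable_mult_indicator_Icc_if_L2[OF _ fin]]
    by (simp add: forward_average_def right_diff_distrib)
  have "ennreal ((\<integral>v. g v * ?p v \<partial>lborel)\<^sup>2) \<le> L2_sqnorm g * L2_sqnorm ?p"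
    by (rule square_lborel_integral_mult_le) auto
  also have "\<dots> \<le> ennreal B * ennreal (2 * \<bar>u - u'\<bar>)"
    using m by (intro mult_mono B L2_sqnorm_indicator_shift_diff_le) auto
  also have "\<dots> = ennreal (B * (2 * \<bar>u - u'\<bar>))"
    using B by (simp add: ennreal_mult)
  finally have "(\<integral>v. g v * ?p v \<partial>lborel)\<^sup>2 \<le> B * (2 * \<bar>u - u'\<bar>)"
    using B by (simp add: ennreal_le_iff)
  then show ?thesis
    unfolding diff power_mult_distrib by (intro mult_left_mono) auto
qed

lemma forward_average_eq_integral:
  assumes m: "m > 0" and "g \<in> borel_measurable lborel" "L2_sqnorm g < \<infinity>"
  shows "forward_average m g x = integral {x..x + 1/m} g / (1/m)"
proof -
  have "set_integrable lborel {x..x + 1/m} g"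
    using integrable_mult_indicator_Icc_if_L2[OF assms(2,3)]
    unfolding set_integrable_def by (simp add: mult.commute)
  then have "(LINT v:{x..x + 1/m}|lborel. g v) = integral {x..x + 1/m} g"
    by (rule set_borel_integral_eq_integral(2))
  then have "(\<integral>v. g v * indicator {x..x + 1/m} v \<partial>lborel) = integral {x..x + 1/m} g"
    unfolding set_lebesgue_integral_def by (simp add: mult.commute)
  then show ?thesis
    using m by (simp add: forward_average_def)
qed

lemma AE_forward_average_tendsto:
  assumes "g \<in> borel_measurable lborel" "L2_sqnorm g < \<infinity>"
  shows "AE x in lborel. (\<lambda>M. forward_average (Suc M) g x) \<longlonglongrightarrow> g x"
proof -
  have "g integrable_on cbox a b" for a b :: real
  proof -
    have "set_integrable lborel {a..b} g"
      using integrable_mult_indicator_Icc_if_L2[OF assms]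
      unfolding set_integrable_def by (simp add: mult.commute)
    then show ?thesis
      using set_borel_integral_eq_integral(1) by simp
  qed
  then obtain N where N: "negligible N"
    and diff: "\<And>x e. \<lbrakk>x \<notin> N; 0 < e\<rbrakk> \<Longrightarrow> \<exists>d>0. \<forall>h. 0 < h \<and> h < d \<longrightarrow>
        norm (integral (cbox x (x + h *\<^sub>R One)) g /\<^sub>R h ^ DIM(real) - g x) < e"
    using integrable_ccontinuous_explicit[of g] by blast
  have "(\<lambda>M. forward_average (Suc M) g x) \<longlonglongrightarrow> g x" if x: "x \<notin> N" for x
  proof (rule LIMSEQ_I)
    fix r :: real assume r: "0 < r"
    obtain d where d: "d > 0" and close: "\<forall>h. 0 < h \<and> h < d \<longrightarrow>
        norm (integral (cbox x (x + h *\<^sub>R One)) g /\<^sub>R h ^ DIM(real) - g x) < r"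
      using diff[OF x r] by blast
    obtain n0 where n0: "inverse (real (Suc n0)) < d"
      using reals_Archimedean[OF d] by blast
    have "norm (forward_average (Suc n) g x - g x) < r" if "n0 \<le> n" for n
    proof -
      have "1 / real (Suc n) < d"
        using n0 that le_imp_inverse_le[of "real (Suc n0)" "real (Suc n)"]
        by (simp add: inverse_eq_divide)
      then show ?thesis
        using close[rule_format, of "1 / real (Suc n)"] forward_average_eq_integral[OF _ assms, of "Suc n" x]
        by (simp add: divide_inverse mult.commute)
    qed
    then show "\<exists>n0. \<forall>n\<ge>n0. norm (forward_average (Suc n) g x - g x) < r"
      by blast
  qed
  then have "AE x in lebesgue. (\<lambda>M. forward_average (Suc M) g x) \<longlonglongrightarrow> g x"
    using N eventually_ae_filter_negligible by blast
  then show ?thesis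
    by (simp add: AE_completion_iff)
qed

lemma ennreal_tendsto_zero_if_add_le_liminf:
  fixes x y :: "nat \<Rightarrow> ennreal"
  assumes le: "\<And>n. x n + y n \<le> a" and liminf: "a \<le> liminf y" and fin: "a < \<infinity>"
  shows "x \<longlonglongrightarrow> 0"
proof (rule order_tendstoI)
  fix e :: ennreal assume "e < 0"
  then show "eventually (\<lambda>n. e < x n) sequentially" by simp
next
  fix e :: ennreal assume e: "0 < e"
  show "eventually (\<lambda>n. x n < e) sequentially"
  proof (cases "e \<le> a")
    case False
    have "x n < e" for n
      using le[of n] False by (metis add_increasing2 linorder_not_le order.trans zero_le)
    then show ?thesis by simp
  next
    case True
    have "a - e < a"
      using e True fin by (metis diff_diff_ennreal diff_le_self_ennreal ennreal_diff_self
          infinity_ennreal_def order.asym order_le_imp_less_or_eq)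
    then have "eventually (\<lambda>n. a - e < y n) sequentially"
      using liminf by (intro less_LiminfD) (rule less_le_trans)
    then show ?thesis
    proof (rule eventually_mono)
      fix n assume "a - e < y n"
      then show "x n < e"
        using True fin le[of n] by (metis add.commute ennreal_add_left_cancel_less
            ennreal_le_minus_iff linorder_not_less order_trans)
    qed
  qed
qed

lemma forward_average_L2_tendsto:
  assumes [measurable]: "g \<in> borel_measurable lborel" and fin: "L2_sqnorm g < \<infinity>"
  shows "(\<lambda>M. L2_sqnorm (\<lambda>v. g v - forward_average (Suc M) g v)) \<longlonglongrightarrow> 0"
proof -
  let ?A = "\<lambda>M. forward_average (Suc M) g"
  define Y where "Y M = L2_sqnorm (\<lambda>v. ?A M v + g v)" for M
  \<comment> \<open>By the parallelogram law and contractivity, \<open>\<parallel>g - A\<^sub>M g\<parallel>\<^sup>2 + \<parallel>A\<^sub>M g + g\<parallel>\<^sup>2 \<le> 4\<parallel>g\<parallel>\<^sup>2\<close>,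
    while Fatou and a.e. convergence give \<open>4\<parallel>g\<parallel>\<^sup>2 \<le> liminf \<parallel>A\<^sub>M g + g\<parallel>\<^sup>2\<close>.\<close>
  have parallelogram_pointwise:
    "ennreal ((a - b)\<^sup>2) + ennreal ((b + a)\<^sup>2) = 2 * ennreal (b\<^sup>2) + 2 * ennreal (a\<^sup>2)" for a b :: real
  proof -
    have "ennreal ((a - b)\<^sup>2) + ennreal ((b + a)\<^sup>2) = ennreal ((a - b)\<^sup>2 + (b + a)\<^sup>2)"
      by (simp add: ennreal_plus)
    also have "(a - b)\<^sup>2 + (b + a)\<^sup>2 = 2 * b\<^sup>2 + 2 * a\<^sup>2"
      by (simp add: power2_eq_square algebra_simps)
    finally show ?thesis
      by (simp add: ennreal_plus ennreal_mult)
  qed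
  have parallelogram: "L2_sqnorm (\<lambda>v. g v - ?A M v) + Y M \<le> 4 * L2_sqnorm g" for M
  proof -
    have "L2_sqnorm (\<lambda>v. g v - ?A M v) + Y M
        = (\<integral>\<^sup>+v. 2 * ennreal ((?A M v)\<^sup>2) + 2 * ennreal ((g v)\<^sup>2) \<partial>lborel)"
      unfolding Y_def
      by (subst nn_integral_add[symmetric]) (simp_all only: parallelogram_pointwise, auto)
    also have "\<dots> = 2 * L2_sqnorm (?A M) + 2 * L2_sqnorm g"
      by (simp add: nn_integral_add nn_integral_cmult)
    also have "\<dots> \<le> 2 * L2_sqnorm g + 2 * L2_sqnorm g"
      by (intro add_mono mult_left_mono L2_sqnorm_forward_average_le) auto
    finally show ?thesis
      by (simp add: ring_distribs(2)[symmetric])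
  qed
  have "4 * L2_sqnorm g = (\<integral>\<^sup>+x. liminf (\<lambda>M. ennreal ((?A M x + g x)\<^sup>2)) \<partial>lborel)"
  proof -
    have "4 * L2_sqnorm g = L2_sqnorm (\<lambda>x. 2 * g x)"
      by (simp add: nn_integral_cmult[symmetric] ennreal_mult power_mult_distrib)
    also have "\<dots> = (\<integral>\<^sup>+x. liminf (\<lambda>M. ennreal ((?A M x + g x)\<^sup>2)) \<partial>lborel)"
      using AE_forward_average_tendsto[OF assms]
    proof (intro nn_integral_cong_AE, eventually_elim)
      case (elim x)
      have "(\<lambda>M. ennreal ((?A M x + g x)\<^sup>2)) \<longlonglongrightarrow> ennreal ((g x + g x)\<^sup>2)"
        by (intro tendsto_ennrealI tendsto_intros elim)
      then have "liminf (\<lambda>M. ennreal ((?A M x + g x)\<^sup>2)) = ennreal ((g x + g x)\<^sup>2)"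
        by (intro lim_imp_Liminf) auto
      then show ?case
        by simp
    qed
    finally show ?thesis .
  qed
  also have "\<dots> \<le> liminf Y"
    unfolding Y_def by (rule nn_integral_liminf) auto
  finally have "4 * L2_sqnorm g \<le> liminf Y" .
  moreover have "4 * L2_sqnorm g < \<infinity>"
    using fin by (simp add: ennreal_mult_less_top)
  ultimately show ?thesis
    by (rule ennreal_tendsto_zero_if_add_le_liminf[OF parallelogram])
qed

lemma continuous_on_forward_average_family:
  fixes h :: "real \<Rightarrow> real \<Rightarrow> real"
  assumes m: "m > 0" and [measurable]: "\<And>t. h t \<in> borel_measurable lborel"
    and bounded: "\<And>t. t \<in> A \<Longrightarrow> L2_sqnorm (h t) \<le> ennreal B" and B: "B \<ge> 0"
    and hoelder: "\<And>t t'. t \<in> A \<Longrightarrow> t' \<in> A \<Longrightarrow>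
      L2_sqnorm (\<lambda>v. h t v - h t' v) \<le> ennreal (C * \<bar>t - t'\<bar> powr a)"
    and C: "C \<ge> 0" and a: "a > 0"
  shows "continuous_on (A \<times> UNIV) (\<lambda>(t, u). forward_average m (h t) u)"
  unfolding continuous_on_def
proof (intro ballI)
  let ?f = "\<lambda>(t, u). forward_average m (h t) u"
  fix x assume x_in: "x \<in> A \<times> (UNIV :: real set)"
  then obtain t0 u0 where x: "x = (t0, u0)" and t0: "t0 \<in> A" by auto
  have fin: "L2_sqnorm (h t) < \<infinity>" if "t \<in> A" for t
    using bounded[OF that] by (simp add: le_less_trans)
  define F where "F p = sqrt (m * (C * \<bar>fst p - t0\<bar> powr a)) + sqrt (m\<^sup>2 * (B * (2 * \<bar>snd p - u0\<bar>)))"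
    for p :: "real \<times> real"
  have powr: "continuous_on UNIV (\<lambda>p::real \<times> real. \<bar>fst p - t0\<bar> powr a)"
    using a by (intro continuous_on_powr' continuous_intros) auto
  have "continuous_on UNIV F"
    unfolding F_def by (intro continuous_intros powr)
  then have "(F \<longlongrightarrow> F x) (at x within A \<times> UNIV)"
    using x_in continuous_on_subset[of UNIV F "A \<times> UNIV"] unfolding continuous_on_def by blast
  moreover have "F x = 0"
    using a by (simp add: F_def x)
  ultimately have F: "(F \<longlongrightarrow> 0) (at x within A \<times> UNIV)"
    by simp
  have "norm (?f p - ?f x) \<le> F p" if p_in: "p \<in> A \<times> UNIV" for p
  proof -
    obtain t u where p: "p = (t, u)" and t: "t \<in> A"
      using p_in by auto
    have "(forward_average m (\<lambda>v. h t v - h t0 v) u)\<^sup>2 \<le> m * (C * \<bar>t - t0\<bar> powr a)"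
      using C by (intro forward_average_square_le m hoelder t t0) auto
    then have time: "\<bar>forward_average m (h t) u - forward_average m (h t0) u\<bar>
        \<le> sqrt (m * (C * \<bar>t - t0\<bar> powr a))"
      by (subst forward_average_diff[OF _ _ fin[OF t] fin[OF t0]]) (auto intro: real_le_rsqrt)
    have "(forward_average m (h t0) u - forward_average m (h t0) u0)\<^sup>2 \<le> m\<^sup>2 * (B * (2 * \<bar>u - u0\<bar>))"
      by (intro forward_average_shift_square_le m bounded t0 B) simp
    then have space: "\<bar>forward_average m (h t0) u - forward_average m (h t0) u0\<bar>
        \<le> sqrt (m\<^sup>2 * (B * (2 * \<bar>u - u0\<bar>)))"
      by (intro real_le_rsqrt) simp
    show ?thesis
      using time space by (simp add: F_def p x)
  qed
  then have "((\<lambda>p. ?f p - ?f x) \<longlongrightarrow> 0) (at x within A \<times> UNIV)"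
    by (intro Lim_null_comparison[OF _ F]) (simp add: eventually_at_filter)
  then show "(?f \<longlongrightarrow> ?f x) (at x within A \<times> UNIV)"
    by (simp add: LIM_zero_iff)
qed

section \<open>Increments of kernels\<close>

definition truncated_section :: "(real \<Rightarrow> real \<Rightarrow> real) \<Rightarrow> real \<Rightarrow> real \<Rightarrow> real" where
  "truncated_section K t v = K t v * indicator {0<..<t} v"

lemma kernel_incr_eq_L2_sqnorm_sections:
  assumes [measurable]: "truncated_section K t \<in> borel_measurable lborel"
    "truncated_section K s \<in> borel_measurable lborel"
    and st: "0 \<le> s" "s \<le> t"
  shows "kernel_incr K t s = L2_sqnorm (\<lambda>v. truncated_section K t v - truncated_section K s v)"
proof -
  define D where "D v = ennreal ((truncated_section K t v - truncated_section K s v)\<^sup>2)" for v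
  have [measurable]: "D \<in> borel_measurable lborel"
    unfolding D_def by measurable
  have "kernel_incr K t s = (\<integral>\<^sup>+v. D v * indicator {s<..<t} v \<partial>lborel) + (\<integral>\<^sup>+v. D v * indicator {0<..<s} v \<partial>lborel)"
    unfolding kernel_incr_def using st
    by (intro arg_cong2[where f="(+)"] nn_integral_cong) (auto simp: D_def truncated_section_def indicator_def)
  also have "\<dots> = (\<integral>\<^sup>+v. D v * indicator {s<..<t} v + D v * indicator {0<..<s} v \<partial>lborel)"
    by (subst nn_integral_add) auto
  also have "\<dots> = (\<integral>\<^sup>+v. D v \<partial>lborel)"
    using AE_lborel_singleton[of s]
    by (intro nn_integral_cong_AE, eventually_elim)
      (use st in \<open>auto simp: D_def truncated_section_def indicator_def\<close>)
  finally show ?thesis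
    unfolding D_def .
qed

lemma kernel_incr_le_L2_sqnorm_diff:
  assumes [measurable]: "K t \<in> borel_measurable lborel" "K s \<in> borel_measurable lborel"
    and vanish: "\<And>u. s < u \<Longrightarrow> u < t \<Longrightarrow> K s u = 0"
  shows "kernel_incr K t s \<le> L2_sqnorm (\<lambda>u. K t u - K s u)"
proof -
  let ?D = "\<lambda>u. ennreal ((K t u - K s u)\<^sup>2)"
  have "kernel_incr K t s = (\<integral>\<^sup>+u. ?D u * indicator {s<..<t} u \<partial>lborel) + (\<integral>\<^sup>+u. ?D u * indicator {0<..<s} u \<partial>lborel)"
    unfolding kernel_incr_def
    by (intro arg_cong2[where f="(+)"] nn_integral_cong) (auto simp: vanish indicator_def)
  also have "\<dots> = (\<integral>\<^sup>+u. ?D u * (indicator {s<..<t} u + indicator {0<..<s} u) \<partial>lborel)"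
    by (subst nn_integral_add[symmetric]) (auto simp: distrib_left)
  also have "\<dots> \<le> L2_sqnorm (\<lambda>u. K t u - K s u)"
    by (intro nn_integral_mono) (auto simp: indicator_def)
  finally show ?thesis .
qed

lemma kernel_incr_add_const_le:
  assumes [measurable]: "K t \<in> borel_measurable lborel" "K s \<in> borel_measurable lborel"
    and st: "s \<le> t"
  shows "kernel_incr (\<lambda>t u. K t u + e) t s \<le> ennreal (3/2) * kernel_incr K t s + ennreal (3 * e\<^sup>2 * (t - s))"
proof -
  let ?I = "indicator {s<..<t} :: real \<Rightarrow> ennreal"
  have "ennreal ((K t u + e)\<^sup>2) * ?I u \<le> ennreal (3/2) * (ennreal ((K t u)\<^sup>2) * ?I u) + ennreal (3 * e\<^sup>2) * ?I u"
    for u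
  proof -
    \<comment> \<open>Young's inequality \<open>2xy \<le> x\<^sup>2/2 + 2y\<^sup>2\<close>\<close>
    have "(K t u + e)\<^sup>2 \<le> 3/2 * (K t u)\<^sup>2 + 3 * e\<^sup>2"
      using zero_le_power2[of "K t u - 2 * e"] by (simp add: power2_eq_square algebra_simps)
    then have "ennreal ((K t u + e)\<^sup>2) \<le> ennreal (3/2 * (K t u)\<^sup>2 + 3 * e\<^sup>2)"
      by (rule ennreal_leI)
    also have "\<dots> = ennreal (3/2) * ennreal ((K t u)\<^sup>2) + ennreal (3 * e\<^sup>2)"
      by (subst ennreal_plus) (simp_all add: ennreal_mult[symmetric])
    finally show ?thesis
      by (cases "u \<in> {s<..<t}") (simp_all add: distrib_right)
  qed
  then have "(\<integral>\<^sup>+u. ennreal ((K t u + e)\<^sup>2) * ?I u \<partial>lborel)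
      \<le> (\<integral>\<^sup>+u. ennreal (3/2) * (ennreal ((K t u)\<^sup>2) * ?I u) + ennreal (3 * e\<^sup>2) * ?I u \<partial>lborel)"
    by (rule nn_integral_mono)
  also have "\<dots> = ennreal (3/2) * (\<integral>\<^sup>+u. ennreal ((K t u)\<^sup>2) * ?I u \<partial>lborel) + ennreal (3 * e\<^sup>2) * ennreal (t - s)"
    using st by (simp add: nn_integral_add nn_integral_cmult)
  also have "ennreal (3 * e\<^sup>2) * ennreal (t - s) = ennreal (3 * e\<^sup>2 * (t - s))"
    using st by (simp add: ennreal_mult)
  finally have on_s_t: "(\<integral>\<^sup>+u. ennreal ((K t u + e)\<^sup>2) * ?I u \<partial>lborel)
      \<le> ennreal (3/2) * (\<integral>\<^sup>+u. ennreal ((K t u)\<^sup>2) * ?I u \<partial>lborel) + ennreal (3 * e\<^sup>2 * (t - s))" .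
  have on_0_s: "(\<integral>\<^sup>+u. ennreal ((K t u + e - (K s u + e))\<^sup>2) * indicator {0<..<s} u \<partial>lborel)
      \<le> ennreal (3/2) * (\<integral>\<^sup>+u. ennreal ((K t u - K s u)\<^sup>2) * indicator {0<..<s} u \<partial>lborel)"
    using mult_right_mono[of "1 :: ennreal" "ennreal (3/2)"] by simp
  show ?thesis
    using add_mono[OF on_s_t on_0_s] unfolding kernel_incr_def by (simp add: distrib_left add_ac)
qed

section \<open>Averaging a kernel satisfying (K)\<close>

lemma condK_truncated_section_measurable [measurable]:
  assumes "condK K"
  shows "truncated_section K t \<in> borel_measurable lborel"
proof (cases "t > 0")
  case True
  then show ?thesis
    using assms unfolding condK_def truncated_section_def[abs_def] by blast
next
  case False
  then have "truncated_section K t = (\<lambda>_. 0)"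
    by (auto simp: truncated_section_def fun_eq_iff)
  then show ?thesis by simp
qed

lemma condK_T_L2_sqnorm_section_diff_le:
  assumes K: "condK K" and KT: "condK_T K T \<eta> \<gamma>" and t: "t \<in> {0..T}" and t': "t' \<in> {0..T}"
  shows "L2_sqnorm (\<lambda>v. truncated_section K t v - truncated_section K t' v) \<le> ennreal (\<eta> * \<bar>t - t'\<bar> powr (2 * \<gamma>))"
proof -
  have *: "L2_sqnorm (\<lambda>v. truncated_section K a v - truncated_section K b v) \<le> ennreal (\<eta> * (a - b) powr (2 * \<gamma>))"
    if "b \<le> a" "a \<in> {0..T}" "b \<in> {0..T}" for a b
    using KT that
    by (subst kernel_incr_eq_L2_sqnorm_sections[symmetric]) (auto simp: K condK_T_def)
  show ?thesis
  proof (cases "t' \<le> t")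
    case False
    have "L2_sqnorm (\<lambda>v. truncated_section K t v - truncated_section K t' v)
        = L2_sqnorm (\<lambda>v. truncated_section K t' v - truncated_section K t v)"
      by (simp only: power2_commute)
    then show ?thesis
      using *[where a=t' and b=t] t t' False by simp
  qed (use *[where a=t and b=t'] t t' in simp)
qed

lemma condK_T_L2_sqnorm_section_le:
  assumes K: "condK K" and KT: "condK_T K T \<eta> \<gamma>" and t: "t \<in> {0..T}"
  shows "L2_sqnorm (truncated_section K t) \<le> ennreal (\<eta> * T powr (2 * \<gamma>))"
proof -
  have "truncated_section K 0 = (\<lambda>_. 0)"
    by (simp add: truncated_section_def fun_eq_iff)
  then have "L2_sqnorm (truncated_section K t) \<le> ennreal (\<eta> * t powr (2 * \<gamma>))"
    using condK_T_L2_sqnorm_section_diff_le[OF K KT t, of 0] t by simp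
  also have "\<dots> \<le> ennreal (\<eta> * T powr (2 * \<gamma>))"
    using KT t by (intro ennreal_leI mult_left_mono powr_mono2) (auto simp: condK_T_def)
  finally show ?thesis .
qed

definition averaged_kernel :: "(real \<Rightarrow> real \<Rightarrow> real) \<Rightarrow> real \<Rightarrow> real \<Rightarrow> real \<Rightarrow> real" where
  "averaged_kernel K m t u = forward_average m (truncated_section K t) u"

lemma averaged_kernel_eq_0:
  assumes "t \<le> u"
  shows "averaged_kernel K m t u = 0"
proof -
  have "(\<lambda>v. truncated_section K t v * indicator {u..u + 1/m} v) = (\<lambda>_. 0)"
    using assms by (auto simp: truncated_section_def indicator_def fun_eq_iff)
  then show ?thesis
    by (simp add: averaged_kernel_def forward_average_def)
qed

lemma continuous_on_averaged_kernel:
  assumes K: "condK K" and KT: "condK_T K T \<eta> \<gamma>" and m: "m > 0"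
  shows "continuous_on ({0..T} \<times> UNIV) (\<lambda>(t, u). averaged_kernel K m t u)"
  unfolding averaged_kernel_def
proof (rule continuous_on_forward_average_family[OF m])
  show "L2_sqnorm (truncated_section K t) \<le> ennreal (\<eta> * T powr (2 * \<gamma>))" if "t \<in> {0..T}" for t
    by (rule condK_T_L2_sqnorm_section_le[OF K KT that])
  show "L2_sqnorm (\<lambda>v. truncated_section K t v - truncated_section K t' v) \<le> ennreal (\<eta> * \<bar>t - t'\<bar> powr (2 * \<gamma>))"
    if "t \<in> {0..T}" "t' \<in> {0..T}" for t t'
    by (rule condK_T_L2_sqnorm_section_diff_le[OF K KT that])
qed (use K KT in \<open>auto simp: condK_T_def\<close>)

lemma kernel_incr_averaged_kernel_le:
  assumes K: "condK K" and KT: "condK_T K T \<eta> \<gamma>" and m: "m > 0"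
    and st: "0 \<le> s" "s \<le> t" "t \<le> T"
  shows "kernel_incr (averaged_kernel K m) t s \<le> ennreal (\<eta> * (t - s) powr (2 * \<gamma>))"
proof -
  have fin: "L2_sqnorm (truncated_section K r) < \<infinity>" if "r \<in> {0..T}" for r
    using condK_T_L2_sqnorm_section_le[OF K KT that] by (simp add: le_less_trans)
  have "kernel_incr (averaged_kernel K m) t s \<le> L2_sqnorm (\<lambda>u. averaged_kernel K m t u - averaged_kernel K m s u)"
    using K by (intro kernel_incr_le_L2_sqnorm_diff averaged_kernel_eq_0)
      (auto simp: averaged_kernel_def[abs_def])
  also have "\<dots> = L2_sqnorm (forward_average m (\<lambda>v. truncated_section K t v - truncated_section K s v))"
    using forward_average_diff[OF _ _ fin fin] K st by (simp add: averaged_kernel_def)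
  also have "\<dots> \<le> L2_sqnorm (\<lambda>v. truncated_section K t v - truncated_section K s v)"
    using K m by (intro L2_sqnorm_forward_average_le) auto
  also have "\<dots> \<le> ennreal (\<eta> * \<bar>t - s\<bar> powr (2 * \<gamma>))"
    using st by (intro condK_T_L2_sqnorm_section_diff_le[OF K KT]) auto
  finally show ?thesis
    using st by simp
qed

lemma averaged_kernel_L2_tendsto:
  assumes K: "condK K" and KT: "condK_T K T \<eta> \<gamma>" and t: "t \<in> {0..T}" and e: "e \<longlonglongrightarrow> 0"
  shows "(\<lambda>M. \<integral>\<^sup>+s. ennreal ((K t s - (averaged_kernel K (Suc M) t s + e M))\<^sup>2) * indicator {0<..<t} s \<partial>lborel)
    \<longlonglongrightarrow> 0"
proof -
  let ?g = "truncated_section K t"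
  let ?X = "\<lambda>M. L2_sqnorm (\<lambda>v. ?g v - forward_average (Suc M) ?g v)"
  have bound: "(\<integral>\<^sup>+s. ennreal ((K t s - (averaged_kernel K (Suc M) t s + e M))\<^sup>2) * indicator {0<..<t} s \<partial>lborel)
      \<le> 2 * ?X M + ennreal (2 * (e M)\<^sup>2 * t)" for M
  proof -
    have "ennreal ((K t s - (averaged_kernel K (Suc M) t s + e M))\<^sup>2) * indicator {0<..<t} s
        \<le> 2 * ennreal ((?g s - forward_average (Suc M) ?g s)\<^sup>2) + ennreal (2 * (e M)\<^sup>2) * indicator {0<..<t} s"
      for s
    proof (cases "s \<in> {0<..<t}")
      case True
      have "(K t s - (averaged_kernel K (Suc M) t s + e M))\<^sup>2 = ((?g s - forward_average (Suc M) ?g s) - e M)\<^sup>2"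
        using True by (simp add: truncated_section_def averaged_kernel_def algebra_simps)
      also have "\<dots> \<le> 2 * (?g s - forward_average (Suc M) ?g s)\<^sup>2 + 2 * (e M)\<^sup>2"
        using zero_le_power2[of "?g s - forward_average (Suc M) ?g s + e M"]
        by (simp add: power2_eq_square algebra_simps)
      finally have "ennreal ((K t s - (averaged_kernel K (Suc M) t s + e M))\<^sup>2)
          \<le> ennreal (2 * (?g s - forward_average (Suc M) ?g s)\<^sup>2 + 2 * (e M)\<^sup>2)"
        by (rule ennreal_leI)
      then show ?thesis
        using True by (simp add: ennreal_plus ennreal_mult)
    qed simp
    then have "(\<integral>\<^sup>+s. ennreal ((K t s - (averaged_kernel K (Suc M) t s + e M))\<^sup>2) * indicator {0<..<t} s \<partial>lborel)
        \<le> (\<integral>\<^sup>+s. 2 * ennreal ((?g s - forward_average (Suc M) ?g s)\<^sup>2) + ennreal (2 * (e M)\<^sup>2) * indicator {0<..<t} s \<partial>lborel)"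
      by (rule nn_integral_mono)
    also have "\<dots> = 2 * ?X M + ennreal (2 * (e M)\<^sup>2) * ennreal t"
      using K t by (simp add: nn_integral_add nn_integral_cmult)
    finally show ?thesis
      using t by (simp add: ennreal_mult)
  qed
  have "?X \<longlonglongrightarrow> 0"
    using K t condK_T_L2_sqnorm_section_le[OF K KT t]
    by (intro forward_average_L2_tendsto) (auto simp: le_less_trans)
  then have "(\<lambda>M. 2 * ?X M + ennreal (2 * (e M)\<^sup>2 * t)) \<longlonglongrightarrow> 2 * 0 + ennreal (2 * 0\<^sup>2 * t)"
    by (intro tendsto_add ennreal_tendsto_cmult tendsto_ennrealI tendsto_intros e) simp
  then have majorant: "(\<lambda>M. 2 * ?X M + ennreal (2 * (e M)\<^sup>2 * t)) \<longlonglongrightarrow> 0"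
    by simp
  show ?thesis
    by (rule tendsto_sandwich[OF _ _ tendsto_const majorant]) (simp, intro always_eventually allI bound)
qed

lemma powr_bound_absorbs_linear_term:
  fixes d T \<gamma> \<eta> e :: real
  assumes d: "0 \<le> d" "d \<le> T" and \<gamma>: "0 < \<gamma>" "\<gamma> \<le> 1/2" and \<eta>: "\<eta> > 0"
    and e: "e\<^sup>2 \<le> \<eta> / (6 * (T + 1))"
  shows "3/2 * (\<eta> * d powr (2 * \<gamma>)) + 3 * e\<^sup>2 * d \<le> 2 * \<eta> * d powr (2 * \<gamma>)"
proof -
  have "d \<le> (T + 1) * d powr (2 * \<gamma>)"
  proof (cases "d \<le> 1")
    case True
    have "d = d powr 1"
      using d by simp
    also have "\<dots> \<le> d powr (2 * \<gamma>)"
      using True d \<gamma> by (intro powr_mono') auto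
    finally have "d \<le> d powr (2 * \<gamma>)" .
    moreover have "0 \<le> T * d powr (2 * \<gamma>)"
      using d by simp
    ultimately show ?thesis
      by (simp add: distrib_right)
  next
    case False
    then have "1 \<le> d powr (2 * \<gamma>)"
      using \<gamma> by (intro ge_one_powr_ge_zero) auto
    then show ?thesis
      using d False by (smt (verit) mult_le_cancel_left1)
  qed
  moreover have "0 \<le> \<eta> / (6 * (T + 1))"
    using d \<eta> by simp
  ultimately have "3 * e\<^sup>2 * d \<le> 3 * (\<eta> / (6 * (T + 1))) * ((T + 1) * d powr (2 * \<gamma>))"
    using d e by (intro mult_mono) auto
  also have "\<dots> = \<eta> / 2 * d powr (2 * \<gamma>)"
    using d by (simp add: field_simps)
  finally show ?thesis
    by simp
qed

lemma kernel_incr_shifted_averaged_kernel_le: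
  assumes K: "condK K" and KT: "condK_T K T \<eta> \<gamma>" and m: "m > 0"
    and e: "e\<^sup>2 \<le> \<eta> / (6 * (T + 1))" and st: "0 \<le> s" "s \<le> t" "t \<le> T"
  shows "kernel_incr (\<lambda>t u. averaged_kernel K m t u + e) t s \<le> ennreal (2 * \<eta> * \<bar>t - s\<bar> powr (2 * \<gamma>))"
proof -
  from KT have \<eta>: "\<eta> > 0" and \<gamma>: "0 < \<gamma>" "\<gamma> \<le> 1/2"
    unfolding condK_T_def by auto
  have "kernel_incr (\<lambda>t u. averaged_kernel K m t u + e) t s
      \<le> ennreal (3/2) * kernel_incr (averaged_kernel K m) t s + ennreal (3 * e\<^sup>2 * (t - s))"
    using K st by (intro kernel_incr_add_const_le) (auto simp: averaged_kernel_def[abs_def])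
  also have "\<dots> \<le> ennreal (3/2) * ennreal (\<eta> * (t - s) powr (2 * \<gamma>)) + ennreal (3 * e\<^sup>2 * (t - s))"
    using st by (intro add_mono mult_left_mono kernel_incr_averaged_kernel_le[OF K KT m]) auto
  also have "\<dots> = ennreal (3/2 * (\<eta> * (t - s) powr (2 * \<gamma>)) + 3 * e\<^sup>2 * (t - s))"
    using \<eta> st by (subst ennreal_plus) (simp_all add: ennreal_mult[symmetric])
  also have "\<dots> \<le> ennreal (2 * \<eta> * \<bar>t - s\<bar> powr (2 * \<gamma>))"
    using powr_bound_absorbs_linear_term[of "t - s" T \<gamma> \<eta> e] st \<eta> \<gamma> e
    by (intro ennreal_leI) simp
  finally show ?thesis .
qed

theorem mainTheorem9:
  fixes \<Gamma> :: "real \<Rightarrow> real \<Rightarrow> real" and T \<eta> \<gamma> :: real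
  assumes K: "condK \<Gamma>"
    and T: "T > 0"
    and KT: "condK_T \<Gamma> T \<eta> \<gamma>"
  shows "\<exists>\<Gamma>M :: nat \<Rightarrow> real \<Rightarrow> real \<Rightarrow> real.
     (\<forall>M. continuous_on {(t, s). 0 \<le> s \<and> s \<le> t \<and> t \<le> T} (\<lambda>(t, s). \<Gamma>M M t s)) \<and>
     (\<forall>t\<in>{0..T}. (\<lambda>M. \<integral>\<^sup>+ s. ennreal ((\<Gamma> t s - \<Gamma>M M t s)\<^sup>2) * indicator {0<..<t} s \<partial>lborel)
                    \<longlonglongrightarrow> 0) \<and>
     (\<forall>M t s. 0 \<le> s \<and> s \<le> t \<and> t \<le> T \<longrightarrow>
        kernel_incr (\<Gamma>M M) t s \<le> ennreal (2 * \<eta> * \<bar>t - s\<bar> powr (2 * \<gamma>))) \<and>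
     ((\<exists>\<epsilon>>0. (\<forall>t s. 0 < s \<and> s < t \<and> s \<ge> t - \<epsilon> \<longrightarrow> \<Gamma> t s \<ge> 0) \<or>
              (\<forall>t s. 0 < s \<and> s < t \<and> s \<ge> t - \<epsilon> \<longrightarrow> \<Gamma> t s \<le> 0)) \<longrightarrow>
       (\<forall>M. AE s in lborel. s \<in> {0..T} \<longrightarrow> \<Gamma>M M s s \<noteq> 0))"
proof -
  define c where "c = sqrt (\<eta> / (6 * (T + 1)))"
  have c: "c > 0"
    using KT T by (simp add: c_def condK_T_def)
  have shift_small: "(c / Suc M)\<^sup>2 \<le> \<eta> / (6 * (T + 1))" for M
    using KT T by (simp add: c_def condK_T_def power_divide divide_le_eq)
  define \<Gamma>M where "\<Gamma>M M t u = averaged_kernel \<Gamma> (Suc M) t u + c / Suc M" for M t u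
  show ?thesis
  proof (intro exI[of _ \<Gamma>M] conjI allI impI ballI)
    show "continuous_on {(t, s). 0 \<le> s \<and> s \<le> t \<and> t \<le> T} (\<lambda>(t, s). \<Gamma>M M t s)" for M
    proof -
      have "continuous_on {(t, s). 0 \<le> s \<and> s \<le> t \<and> t \<le> T} (\<lambda>(t, u). averaged_kernel \<Gamma> (Suc M) t u)"
        by (rule continuous_on_subset[OF continuous_on_averaged_kernel[OF K KT]]) auto
      then show ?thesis
        unfolding \<Gamma>M_def case_prod_unfold by (intro continuous_intros)
    qed
    show "(\<lambda>M. \<integral>\<^sup>+ s. ennreal ((\<Gamma> t s - \<Gamma>M M t s)\<^sup>2) * indicator {0<..<t} s \<partial>lborel) \<longlonglongrightarrow> 0"
      if "t \<in> {0..T}" for t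
      unfolding \<Gamma>M_def using averaged_kernel_L2_tendsto[OF K KT that] lim_const_over_n LIMSEQ_Suc
      by blast
    show "kernel_incr (\<Gamma>M M) t s \<le> ennreal (2 * \<eta> * \<bar>t - s\<bar> powr (2 * \<gamma>))"
      if "0 \<le> s \<and> s \<le> t \<and> t \<le> T" for M t s
      unfolding \<Gamma>M_def[abs_def] using that shift_small
      by (intro kernel_incr_shifted_averaged_kernel_le[OF K KT]) auto
    show "AE s in lborel. s \<in> {0..T} \<longrightarrow> \<Gamma>M M s s \<noteq> 0" for M
      using c by (simp add: \<Gamma>M_def averaged_kernel_eq_0)
  qed
qed

end
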